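(* Let $c \geq 1$, $r \geq 0$, $k \geq 1$ be integers. Then every $c$-NSOBDD computing the function $F_{r,k}$ has size at least $2^{rk/(4c-2)}$.
   Context: For a graph $G$, the CNF $CNF(G)$ has a variable $X_u$ for each vertex $u$ and a variable $X_{u,v}=X_{v,u}$ for each edge $\{u,v\}$; its clauses are $(X_u \vee X_{u,v} \vee X_v)$ for each edge $\{u,v\}$. $T_r$ is the complete binary tree of height $r$; $CT_{r,k}$ is obtained from $T_r$ by replacing each node by a $k$-clique and, for each edge $\{a,b\}$ of $T_r$, joining every vertex of the clique of $a$ to every vertex of the clique of $b$; $F_{r,k}=CNF(CT_{r,k})$. A non-deterministic branching program is a directed acyclic graph with one root and one leaf, some of whose edges are labelled by literals of variables. A path is consistent if it does not contain two edges labelled by opposite literals of the same variable; a consistent root-leaf path is a computational path. The program computes $F$: an assignment $S$ (viewed as a set of literals) satisfies $F$ iff some computational path has all its edge labels in $S$. A $c$-NSOBDD (nondeterministic semantic $c$-OBDD) is such a program for which there is a permutation $SV$ of its variables such that every computational path $P$ can be written as a concatenation $P=P_1+\dots+P_c$ of subpaths where on each $P_i$ each variable occurs at most once as a label and the sequence of labels along $P_i$ is ordered according to $SV$. Size is the number of nodes. *)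

theory Defs
  imports Complex_Main
begin

text \<open>Variables of CNF(G): one per vertex, one per (undirected) edge; an edge is
  represented as the two-element set of its endpoints, so X_{u,v} = X_{v,u}.\<close>
datatype 'v gvar = VarV 'v | VarE "'v set"

type_synonym 'x lit = "'x \<times> bool"   \<comment> \<open>(x, True) is x, (x, False) is not x\<close>
type_synonym 'x clause = "'x lit set"
type_synonym 'x cnf = "'x clause set"

definition sat :: "'x cnf \<Rightarrow> ('x \<Rightarrow> bool) \<Rightarrow> bool" where
  "sat F S \<longleftrightarrow> (\<forall>C\<in>F. \<exists>(x,b)\<in>C. S x = b)"

text \<open>A graph is given by its edge set (set of 2-element vertex sets).\<close>
definition cnf_of_graph :: "'v set set \<Rightarrow> 'v gvar cnf" where
  "cnf_of_graph Ed = {{(VarV u, True), (VarE {u,v}, True), (VarV v, True)} | u v.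
                         {u,v} \<in> Ed \<and> u \<noteq> v}"

text \<open>Nodes of T_r: binary strings of length at most r (root = []), edges between a
  node and its children a@[x]. Vertices of CT_{r,k}: pairs (a,i) with a a node of T_r and i<k.\<close>
definition tree_nodes :: "nat \<Rightarrow> bool list set" where
  "tree_nodes r = {a. length a \<le> r}"

definition tree_adj :: "bool list \<Rightarrow> bool list \<Rightarrow> bool" where
  "tree_adj a b \<longleftrightarrow> (\<exists>x. b = a @ [x]) \<or> (\<exists>x. a = b @ [x])"

definition CT_vertices :: "nat \<Rightarrow> nat \<Rightarrow> (bool list \<times> nat) set" where
  "CT_vertices r k = {(a,i). a \<in> tree_nodes r \<and> i < k}"

definition CT_edges :: "nat \<Rightarrow> nat \<Rightarrow> (bool list \<times> nat) set set" where
  "CT_edges r k = {{u,v} | u v. u \<in> CT_vertices r k \<and> v \<in> CT_vertices r k \<and> u \<noteq> v \<and>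
                       (fst u = fst v \<or> tree_adj (fst u) (fst v))}"

definition F :: "nat \<Rightarrow> nat \<Rightarrow> (bool list \<times> nat) gvar cnf" where
  "F r k = cnf_of_graph (CT_edges r k)"

text \<open>A program is (N, E, s, t): finite node set N, finite set of edges (u, label, v)
  where label is None (unlabelled) or Some literal; root s, leaf t.\<close>
type_synonym ('n,'x) edge = "'n \<times> 'x lit option \<times> 'n"

fun is_path :: "('n,'x) edge set \<Rightarrow> 'n \<Rightarrow> ('n,'x) edge list \<Rightarrow> 'n \<Rightarrow> bool" where
  "is_path E u [] v \<longleftrightarrow> u = v"
| "is_path E u ((a,l,b) # P) v \<longleftrightarrow> (a,l,b) \<in> E \<and> a = u \<and> is_path E b P v"

definition labels :: "('n,'x) edge list \<Rightarrow> 'x lit list" where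
  "labels P = [the l. (a,l,b) \<leftarrow> P, l \<noteq> None]"

definition consistent :: "('n,'x) edge list \<Rightarrow> bool" where
  "consistent P \<longleftrightarrow> \<not> (\<exists>x. (x,True) \<in> set (labels P) \<and> (x,False) \<in> set (labels P))"

definition is_bp :: "'n set \<Rightarrow> ('n,'x) edge set \<Rightarrow> 'n \<Rightarrow> 'n \<Rightarrow> bool" where
  "is_bp N E s t \<longleftrightarrow> finite N \<and> finite E \<and> s \<in> N \<and> t \<in> N \<and>
     (\<forall>(a,l,b)\<in>E. a \<in> N \<and> b \<in> N) \<and>
     acyclic {(a,b). \<exists>l. (a,l,b) \<in> E} \<and>
     \<comment> \<open>s is the unique root (node without incoming edges)\<close>
     (\<forall>v\<in>N. (\<not>(\<exists>a l. (a,l,v) \<in> E)) \<longleftrightarrow> v = s) \<and>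
     \<comment> \<open>t is the unique leaf (node without outgoing edges)\<close>
     (\<forall>v\<in>N. (\<not>(\<exists>l b. (v,l,b) \<in> E)) \<longleftrightarrow> v = t)"

definition comp_path :: "('n,'x) edge set \<Rightarrow> 'n \<Rightarrow> 'n \<Rightarrow> ('n,'x) edge list \<Rightarrow> bool" where
  "comp_path E s t P \<longleftrightarrow> is_path E s P t \<and> consistent P"

definition computes :: "('n,'x) edge set \<Rightarrow> 'n \<Rightarrow> 'n \<Rightarrow> 'x cnf \<Rightarrow> bool" where
  "computes E s t G \<longleftrightarrow> (\<forall>S. sat G S \<longleftrightarrow>
      (\<exists>P. comp_path E s t P \<and> (\<forall>(x,b)\<in>set (labels P). S x = b)))"

definition prog_vars :: "('n,'x) edge set \<Rightarrow> 'x set" where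
  "prog_vars E = {x. \<exists>a b v. (a, Some (x,b), v) \<in> E}"

text \<open>c-NSOBDD: there is a linear order SV on the program's variables (given by an
  injective ranking) such that every computational path splits into c consecutive
  subpaths, on each of which the label variables occur at most once and in SV order.\<close>
definition is_c_NSOBDD :: "nat \<Rightarrow> 'n set \<Rightarrow> ('n,'x) edge set \<Rightarrow> 'n \<Rightarrow> 'n \<Rightarrow> bool" where
  "is_c_NSOBDD c N E s t \<longleftrightarrow> is_bp N E s t \<and>
     (\<exists>SV :: 'x \<Rightarrow> nat. inj_on SV (prog_vars E) \<and>
        (\<forall>P. comp_path E s t P \<longrightarrow>
           (\<exists>Ps. length Ps = c \<and> concat Ps = P \<and>
                 (\<forall>Q\<in>set Ps. sorted_wrt (<) (map (SV \<circ> fst) (labels Q))))))"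

end

theory Submission
  imports Defs
begin

text \<open>Every computational path of a \<open>c\<close>-NSOBDD with variable order \<open>SV\<close> splits into \<open>2c\<close>
  segments alternating between variables ranked below and at least a threshold \<open>th\<close>. Accepting
  paths that pass through the same \<open>2c - 1\<close> inner splitting nodes can be recombined, so the
  assignment agreeing with the first path below \<open>th\<close> and with the second above it is accepted too.
  Hence a family of satisfying assignments, any two of which have an unsatisfiable mix in some
  order, has at most \<open>|N|^(2c-1)\<close> members.

  For \<open>F_{r,k}\<close> such a family of size \<open>2^(\<lceil>r/2\<rceil>k)\<close> comes from a matching of edges of
  \<open>CT_{r,k}\<close> crossing the threshold: for each subset \<open>T\<close> of the matching falsify every matched
  edge variable, together with the lower endpoint of the edges in \<open>T\<close> and the upper endpoint of
  the others. The matching is built by induction on the height, two levels at a time: among the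
  three grandchild subtrees take the one with the median threshold, and extend its matching by
  \<open>k\<close> greedily chosen crossing edges in the rest of the subtree, which is connected and has \<open>k\<close>
  vertices on either side of that threshold.\<close>

lemma labels_Nil [simp]: "labels [] = []"
  by (simp add: labels_def)

lemma labels_Cons [simp]:
  "labels ((a,l,b) # P) = (if l = None then labels P else the l # labels P)"
  by (simp add: labels_def)

lemma labels_append [simp]: "labels (P @ Q) = labels P @ labels Q"
  by (simp add: labels_def)

lemma labels_concat: "labels (concat Ls) = concat (map labels Ls)"
  by (induction Ls) auto

definition agrees :: "('x \<Rightarrow> bool) \<Rightarrow> ('n,'x) edge list \<Rightarrow> bool" where
  "agrees S P \<longleftrightarrow> (\<forall>(x,b)\<in>set (labels P). S x = b)"

lemma agrees_concat: "agrees S (concat Ls) \<longleftrightarrow> (\<forall>L\<in>set Ls. agrees S L)"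
  by (auto simp: agrees_def labels_concat)

lemma consistent_if_agrees:
  assumes "agrees S P"
  shows "consistent P"
  unfolding consistent_def
proof
  assume "\<exists>x. (x, True) \<in> set (labels P) \<and> (x, False) \<in> set (labels P)"
  then obtain x where "(x, True) \<in> set (labels P)" "(x, False) \<in> set (labels P)" by blast
  then have "S x = True" "S x = False" using assms by (auto simp: agrees_def)
  then show False by simp
qed

lemma computes_iff:
  "computes E s t G \<longleftrightarrow> (\<forall>S. sat G S \<longleftrightarrow> (\<exists>P. comp_path E s t P \<and> agrees S P))"
  by (simp add: computes_def agrees_def)

lemma is_path_append: "is_path E u (P @ Q) v \<longleftrightarrow> (\<exists>w. is_path E u P w \<and> is_path E w Q v)"
  by (induction P arbitrary: u) auto

lemma is_path_in_nodes:
  "is_path E u P v \<Longrightarrow> u \<in> N \<Longrightarrow> \<forall>(a,l,b)\<in>E. a \<in> N \<and> b \<in> N \<Longrightarrow> v \<in> N"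
  by (induction P arbitrary: u) fastforce+

lemma is_path_labels_prog_vars: "is_path E u P v \<Longrightarrow> (x,b) \<in> set (labels P) \<Longrightarrow> x \<in> prog_vars E"
proof (induction P arbitrary: u)
  case (Cons e P)
  then show ?case
    by (cases e) (auto simp: prog_vars_def split: if_splits; blast)
qed simp

definition path_through :: "('n,'x) edge set \<Rightarrow> 'n list \<Rightarrow> ('n,'x) edge list list \<Rightarrow> bool" where
  "path_through E ws Ls \<longleftrightarrow> length ws = Suc (length Ls) \<and>
     (\<forall>i<length Ls. is_path E (ws ! i) (Ls ! i) (ws ! Suc i))"

lemma path_through_Cons:
  "path_through E (u # ws) (L # Ls) \<longleftrightarrow> ws \<noteq> [] \<and> is_path E u L (hd ws) \<and> path_through E ws Ls"
  by (cases ws) (auto simp: path_through_def less_Suc_eq_0_disj)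

lemma is_path_concat_iff:
  "is_path E u (concat Ls) v \<longleftrightarrow> (\<exists>ws. path_through E ws Ls \<and> hd ws = u \<and> last ws = v)"
proof (induction Ls arbitrary: u)
  case Nil
  show ?case
  proof
    assume "is_path E u (concat []) v"
    then show "\<exists>ws. path_through E ws [] \<and> hd ws = u \<and> last ws = v"
      by (intro exI[of _ "[u]"]) (simp add: path_through_def)
  qed (auto simp: path_through_def length_Suc_conv)
next
  case (Cons L Ls)
  have "is_path E u (concat (L # Ls)) v \<longleftrightarrow>
      (\<exists>w ws. is_path E u L w \<and> path_through E ws Ls \<and> hd ws = w \<and> last ws = v)"
    by (auto simp: is_path_append Cons.IH)
  also have "\<dots> \<longleftrightarrow> (\<exists>ws. path_through E ws (L # Ls) \<and> hd ws = u \<and> last ws = v)"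
  proof
    assume "\<exists>w ws. is_path E u L w \<and> path_through E ws Ls \<and> hd ws = w \<and> last ws = v"
    then obtain ws where "is_path E u L (hd ws)" "path_through E ws Ls" "last ws = v" by blast
    moreover have "ws \<noteq> []" using \<open>path_through E ws Ls\<close> by (auto simp: path_through_def)
    ultimately show "\<exists>ws. path_through E ws (L # Ls) \<and> hd ws = u \<and> last ws = v"
      by (intro exI[of _ "u # ws"]) (simp add: path_through_Cons)
  next
    assume "\<exists>ws. path_through E ws (L # Ls) \<and> hd ws = u \<and> last ws = v"
    then obtain ws where "path_through E (u # ws) (L # Ls)" "last (u # ws) = v"
      by (metis list.collapse list.sel(1) path_through_def Zero_neq_Suc list.size(3))
    then show "\<exists>w ws. is_path E u L w \<and> path_through E ws Ls \<and> hd ws = w \<and> last ws = v"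
      by (auto simp: path_through_Cons)
  qed
  finally show ?case .
qed

lemma path_through_in_nodes:
  assumes "path_through E ws Ls" "hd ws \<in> N" "\<forall>(a,l,b)\<in>E. a \<in> N \<and> b \<in> N"
  shows "set ws \<subseteq> N"
proof -
  have "ws ! i \<in> N" if "i < length ws" for i
    using that
  proof (induction i)
    case 0 then show ?case using assms(2) by (simp add: hd_conv_nth)
  next
    case (Suc i)
    then have "is_path E (ws ! i) (Ls ! i) (ws ! Suc i)" "ws ! i \<in> N"
      using assms(1) by (auto simp: path_through_def)
    then show ?case using assms(3) by (rule is_path_in_nodes)
  qed
  then show ?thesis by (auto simp: in_set_conv_nth)
qed


section \<open>A fooling-set bound for semantic c-OBDDs\<close>

definition c_ordered :: "nat \<Rightarrow> ('x \<Rightarrow> nat) \<Rightarrow> ('n,'x) edge list \<Rightarrow> bool" where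
  "c_ordered c SV P \<longleftrightarrow> (\<exists>Ps. length Ps = c \<and> concat Ps = P \<and>
     (\<forall>Q\<in>set Ps. sorted_wrt (<) (map (SV \<circ> fst) (labels Q))))"

lemma is_c_NSOBDD_iff:
  "is_c_NSOBDD c N E s t \<longleftrightarrow> is_bp N E s t \<and>
     (\<exists>SV. inj_on SV (prog_vars E) \<and> (\<forall>P. comp_path E s t P \<longrightarrow> c_ordered c SV P))"
  by (simp add: is_c_NSOBDD_def c_ordered_def)

definition threshold_mix :: "('x \<Rightarrow> nat) \<Rightarrow> nat \<Rightarrow> ('x \<Rightarrow> bool) \<Rightarrow> ('x \<Rightarrow> bool) \<Rightarrow> 'x \<Rightarrow> bool" where
  "threshold_mix SV th S1 S2 x = (if SV x < th then S1 x else S2 x)"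

definition alternating :: "('x \<Rightarrow> nat) \<Rightarrow> nat \<Rightarrow> ('n,'x) edge list list \<Rightarrow> bool" where
  "alternating SV th Ls \<longleftrightarrow> (\<forall>i<length Ls. \<forall>(x,b)\<in>set (labels (Ls ! i)). SV x < th \<longleftrightarrow> even i)"

lemma alternating_Nil [simp]: "alternating SV th []"
  by (simp add: alternating_def)

lemma alternating_Cons2:
  "alternating SV th (L1 # L2 # Ls) \<longleftrightarrow> (\<forall>(x,b)\<in>set (labels L1). SV x < th) \<and>
     (\<forall>(x,b)\<in>set (labels L2). th \<le> SV x) \<and> alternating SV th Ls"
  by (auto simp: alternating_def All_less_Suc2 not_less)

lemma sorted_labels_split_at:
  fixes SV :: "'x \<Rightarrow> nat" and Q :: "('n,'x) edge list"
  assumes "sorted_wrt (<) (map (SV \<circ> fst) (labels Q))"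
  shows "\<exists>Q1 Q2. Q = Q1 @ Q2 \<and> (\<forall>(x,b)\<in>set (labels Q1). SV x < th) \<and>
           (\<forall>(x,b)\<in>set (labels Q2). th \<le> SV x)"
  using assms
proof (induction Q)
  case Nil
  show ?case by (intro exI[of _ "[]"]) simp
next
  case (Cons e Q)
  obtain u l v where e: "e = (u, l, v)" by (cases e)
  show ?case
  proof (cases "\<exists>x b. l = Some (x, b) \<and> th \<le> SV x")
    case True
    then obtain x y where l: "l = Some (x, y)" "th \<le> SV x" by blast
    moreover have "\<forall>z\<in>set (labels Q). SV x < SV (fst z)"
      using Cons.prems e l by simp
    ultimately have "\<forall>(z,b)\<in>set (labels Q). th \<le> SV z"
      by (auto dest!: bspec)
    then show ?thesis using e l by (intro exI[of _ "[]"] exI[of _ "e # Q"]) simp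
  next
    case False
    have "sorted_wrt (<) (map (SV \<circ> fst) (labels Q))"
      using Cons.prems e by (auto simp: o_def split: if_splits)
    then obtain Q1 Q2 where "Q = Q1 @ Q2" "\<forall>(x,b)\<in>set (labels Q1). SV x < th"
      "\<forall>(x,b)\<in>set (labels Q2). th \<le> SV x" using Cons.IH by blast
    then show ?thesis using False e by (intro exI[of _ "e # Q1"] exI[of _ Q2]) (auto simp: not_le)
  qed
qed

lemma c_ordered_alternating_split:
  fixes SV :: "'x \<Rightarrow> nat" and P :: "('n,'x) edge list"
  assumes "c_ordered c SV P"
  shows "\<exists>Ls. length Ls = 2 * c \<and> concat Ls = P \<and> alternating SV th Ls"
proof -
  have "\<exists>Ls. length Ls = 2 * length Ps \<and> concat Ls = concat Ps \<and> alternating SV th Ls"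
    if "\<forall>Q\<in>set Ps. sorted_wrt (<) (map (SV \<circ> fst) (labels Q))" for Ps :: "('n,'x) edge list list"
    using that
  proof (induction Ps)
    case Nil
    show ?case by (intro exI[of _ "[]"]) simp
  next
    case (Cons Q Ps)
    then obtain Ls where "length Ls = 2 * length Ps" "concat Ls = concat Ps" "alternating SV th Ls"
      by auto
    moreover have "sorted_wrt (<) (map (SV \<circ> fst) (labels Q))" using Cons.prems by (simp add: o_def)
    then obtain Q1 Q2 where "Q = Q1 @ Q2" "\<forall>(x,b)\<in>set (labels Q1). SV x < th"
      "\<forall>(x,b)\<in>set (labels Q2). th \<le> SV x" using sorted_labels_split_at by blast
    ultimately show ?case
      by (intro exI[of _ "Q1 # Q2 # Ls"]) (simp add: alternating_Cons2)
  qed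
  then show ?thesis using assms by (auto simp: c_ordered_def)
qed

lemma agrees_threshold_mix_below:
  "agrees S1 L \<Longrightarrow> \<forall>(x,b)\<in>set (labels L). SV x < th \<Longrightarrow> agrees (threshold_mix SV th S1 S2) L"
  by (auto simp: agrees_def threshold_mix_def split_beta)

lemma agrees_threshold_mix_above:
  "agrees S2 L \<Longrightarrow> \<forall>(x,b)\<in>set (labels L). \<not> SV x < th \<Longrightarrow> agrees (threshold_mix SV th S1 S2) L"
  by (auto simp: agrees_def threshold_mix_def split_beta)

text \<open>Two accepting paths passing through the same nodes at their splitting points can be
  recombined, taking the segments below \<open>th\<close> from the first and the others from the second.\<close>
lemma sat_threshold_mix:
  assumes comp: "computes E s t G"
    and through: "path_through E ws Ls1" "path_through E ws Ls2" "hd ws = s" "last ws = t"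
    and alt: "alternating SV th Ls1" "alternating SV th Ls2"
    and agr: "agrees S1 (concat Ls1)" "agrees S2 (concat Ls2)"
  shows "sat G (threshold_mix SV th S1 S2)"
proof -
  define n where "n = length Ls1"
  have n2: "length Ls2 = n" using through(1,2) by (simp add: path_through_def n_def)
  define Ls where "Ls = map (\<lambda>i. if even i then Ls1 ! i else Ls2 ! i) [0..<n]"
  have "path_through E ws Ls"
    using through(1,2) n2 by (auto simp: path_through_def Ls_def n_def)
  then have path: "is_path E s (concat Ls) t"
    using through(3,4) by (auto simp: is_path_concat_iff)
  have "agrees (threshold_mix SV th S1 S2) (Ls ! i)" if "i < n" for i
  proof (cases "even i")
    case True
    have "agrees S1 (Ls1 ! i)" using agr(1) that by (simp add: agrees_concat n_def)
    moreover have "\<forall>(x,b)\<in>set (labels (Ls1 ! i)). SV x < th"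
      using alt(1) that True unfolding alternating_def n_def by blast
    ultimately show ?thesis
      using that True by (simp add: Ls_def agrees_threshold_mix_below)
  next
    case False
    have "agrees S2 (Ls2 ! i)" using agr(2) that n2 by (simp add: agrees_concat)
    moreover have "\<forall>(x,b)\<in>set (labels (Ls2 ! i)). \<not> SV x < th"
      using alt(2) that n2 False unfolding alternating_def by blast
    ultimately show ?thesis
      using that False by (simp add: Ls_def agrees_threshold_mix_above)
  qed
  moreover have "length Ls = n" by (simp add: Ls_def)
  ultimately have "agrees (threshold_mix SV th S1 S2) (concat Ls)"
    by (auto simp: agrees_concat in_set_conv_nth)
  with path have "comp_path E s t (concat Ls)"
    by (simp add: comp_path_def consistent_if_agrees)
  with \<open>agrees (threshold_mix SV th S1 S2) (concat Ls)\<close> show ?thesis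
    using comp by (auto simp: computes_iff)
qed

definition fooling_set :: "'x cnf \<Rightarrow> ('x \<Rightarrow> nat) \<Rightarrow> nat \<Rightarrow> ('x \<Rightarrow> bool) set \<Rightarrow> bool" where
  "fooling_set G SV th A \<longleftrightarrow> (\<forall>S\<in>A. sat G S) \<and>
     (\<forall>S\<in>A. \<forall>S'\<in>A. S \<noteq> S' \<longrightarrow>
        \<not> sat G (threshold_mix SV th S S') \<or> \<not> sat G (threshold_mix SV th S' S))"

lemma Cons_butlast_tl_snoc:
  "Suc 0 < length ws \<Longrightarrow> hd ws = s \<Longrightarrow> last ws = t \<Longrightarrow> s # butlast (tl ws) @ [t] = ws"
  by (cases ws) auto

lemma comp_path_threshold_split:
  assumes bp: "is_bp N E s t" and ord: "\<forall>P. comp_path E s t P \<longrightarrow> c_ordered c SV P"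
    and "c \<ge> 1" and P: "comp_path E s t P"
  shows "\<exists>ms Ls. set ms \<subseteq> N \<and> length ms = 2 * c - 1 \<and> path_through E (s # ms @ [t]) Ls \<and>
           alternating SV th Ls \<and> concat Ls = P"
proof -
  obtain Ls where Ls: "length Ls = 2 * c" "concat Ls = P" "alternating SV th Ls"
    using ord P c_ordered_alternating_split by blast
  then obtain ws where ws: "path_through E ws Ls" "hd ws = s" "last ws = t"
    using P by (auto simp: comp_path_def is_path_concat_iff)
  have "length ws = Suc (2 * c)" using ws(1) Ls(1) by (simp add: path_through_def)
  then have ws_eq: "s # butlast (tl ws) @ [t] = ws"
    using ws(2,3) \<open>c \<ge> 1\<close> by (intro Cons_butlast_tl_snoc) simp_all
  have "hd ws \<in> N" "\<forall>(a,l,b)\<in>E. a \<in> N \<and> b \<in> N"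
    using bp ws(2) unfolding is_bp_def by blast+
  then have "set ws \<subseteq> N" using path_through_in_nodes ws(1) by blast
  moreover have "set (butlast (tl ws)) \<subseteq> set ws"
    by (cases ws) (auto dest: in_set_butlastD)
  moreover have "path_through E (s # butlast (tl ws) @ [t]) Ls"
    using ws(1) by (simp only: ws_eq)
  ultimately show ?thesis
    using Ls(2,3) \<open>length ws = Suc (2 * c)\<close> by (intro exI[of _ "butlast (tl ws)"] exI[of _ Ls]) auto
qed

text \<open>Each assignment of a fooling set is witnessed by the \<open>2c - 1\<close> inner splitting points of an
  accepting path, and distinct assignments get distinct witnesses.\<close>
theorem fooling_set_card_le:
  assumes bp: "is_bp N E s t" and ord: "\<forall>P. comp_path E s t P \<longrightarrow> c_ordered c SV P"
    and comp: "computes E s t G" and "c \<ge> 1" and "finite A" and fool: "fooling_set G SV th A"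
  shows "card A \<le> card N ^ (2 * c - 1)"
proof -
  let ?Mid = "{ms. set ms \<subseteq> N \<and> length ms = 2 * c - 1}"
  have "\<forall>S\<in>A. \<exists>w. fst w \<in> ?Mid \<and> path_through E (s # fst w @ [t]) (snd w) \<and>
          alternating SV th (snd w) \<and> agrees S (concat (snd w))"
  proof
    fix S assume "S \<in> A"
    then have "sat G S" using fool by (simp add: fooling_set_def)
    then obtain P where "comp_path E s t P" "agrees S P"
      using comp by (auto simp: computes_iff)
    then show "\<exists>w. fst w \<in> ?Mid \<and> path_through E (s # fst w @ [t]) (snd w) \<and>
          alternating SV th (snd w) \<and> agrees S (concat (snd w))"
      using comp_path_threshold_split[OF bp ord \<open>c \<ge> 1\<close>, of P th] by auto
  qed
  then obtain w where w: "\<forall>S\<in>A. fst (w S) \<in> ?Mid \<and>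
      path_through E (s # fst (w S) @ [t]) (snd (w S)) \<and>
      alternating SV th (snd (w S)) \<and> agrees S (concat (snd (w S)))"
    by (rule bchoice[THEN exE])
  define mid where "mid S = fst (w S)" for S
  have wS: "mid S \<in> ?Mid" "path_through E (s # mid S @ [t]) (snd (w S))"
    "alternating SV th (snd (w S))" "agrees S (concat (snd (w S)))" if "S \<in> A" for S
    using bspec[OF w that] unfolding mid_def by auto
  have mix_sat: "sat G (threshold_mix SV th S1 S2)" if "S1 \<in> A" "S2 \<in> A" "mid S1 = mid S2" for S1 S2
  proof (rule sat_threshold_mix[OF comp wS(2)[OF that(1)]])
    show "path_through E (s # mid S1 @ [t]) (snd (w S2))"
      unfolding that(3) by (rule wS(2)[OF that(2)])
  qed (use wS that in simp_all)
  have "inj_on mid A"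
  proof (rule inj_onI, rule ccontr)
    fix S S' assume S: "S \<in> A" "S' \<in> A" "mid S = mid S'" and "S \<noteq> S'"
    then have "\<not> sat G (threshold_mix SV th S S') \<or> \<not> sat G (threshold_mix SV th S' S)"
      using fool by (simp add: fooling_set_def)
    then show False using mix_sat[OF S] mix_sat[OF S(2,1) S(3)[symmetric]] by blast
  qed
  have "finite N" using bp by (simp add: is_bp_def)
  have "card A = card (mid ` A)" using \<open>inj_on mid A\<close> by (simp add: card_image)
  also have "\<dots> \<le> card ?Mid"
    using wS(1) \<open>finite N\<close> by (intro card_mono) (auto simp: finite_lists_length_eq)
  also have "\<dots> = card N ^ (2 * c - 1)"
    using \<open>finite N\<close> by (simp add: card_lists_length_eq)
  finally show ?thesis .
qed

section \<open>Cut matchings in the graphs CT_{r,k}\<close>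

text \<open>Lower endpoints are ranked below \<open>th\<close> and upper ones at least \<open>th\<close>, so the pairs are
  pairwise disjoint as soon as both projections are injective.\<close>
definition cut_matching ::
  "(bool list \<times> nat \<Rightarrow> nat) \<Rightarrow> nat \<Rightarrow> (bool list \<times> nat) set
     \<Rightarrow> ((bool list \<times> nat) \<times> (bool list \<times> nat)) set \<Rightarrow> bool" where
  "cut_matching \<rho> th W P \<longleftrightarrow> finite P \<and>
     (\<forall>(u,v)\<in>P. u \<in> W \<and> v \<in> W \<and> \<rho> u < th \<and> th \<le> \<rho> v \<and> tree_adj (fst u) (fst v)) \<and>
     inj_on fst P \<and> inj_on snd P"

lemma tree_adj_sym: "tree_adj a b \<longleftrightarrow> tree_adj b a"
  by (auto simp: tree_adj_def)

lemma tree_adj_neq: "tree_adj a b \<Longrightarrow> a \<noteq> b"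
  by (auto simp: tree_adj_def)

lemma cut_matching_mono: "cut_matching \<rho> th W P \<Longrightarrow> W \<subseteq> W' \<Longrightarrow> cut_matching \<rho> th W' P"
  unfolding cut_matching_def by blast

lemma cut_matching_empty [simp]: "cut_matching \<rho> th W {}"
  by (simp add: cut_matching_def)

lemma cut_matching_pairD:
  "cut_matching \<rho> th W P \<Longrightarrow> (u, v) \<in> P \<Longrightarrow>
     u \<in> W \<and> v \<in> W \<and> \<rho> u < th \<and> th \<le> \<rho> v \<and> tree_adj (fst u) (fst v)"
  unfolding cut_matching_def by blast

lemma cut_matching_Un:
  assumes P1: "cut_matching \<rho> th W1 P1" and P2: "cut_matching \<rho> th W2 P2" and "W1 \<inter> W2 = {}"
  shows "cut_matching \<rho> th (W1 \<union> W2) (P1 \<union> P2)" "card (P1 \<union> P2) = card P1 + card P2"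
proof -
  have "fst ` P1 \<subseteq> W1" "snd ` P1 \<subseteq> W1" "fst ` P2 \<subseteq> W2" "snd ` P2 \<subseteq> W2"
    using cut_matching_pairD[OF P1] cut_matching_pairD[OF P2] by auto
  then have disj: "fst ` P1 \<inter> fst ` P2 = {}" "snd ` P1 \<inter> snd ` P2 = {}" "P1 \<inter> P2 = {}"
    using \<open>W1 \<inter> W2 = {}\<close> by blast+
  then show "cut_matching \<rho> th (W1 \<union> W2) (P1 \<union> P2)"
    using P1 P2 unfolding cut_matching_def by (auto simp: inj_on_Un)
  show "card (P1 \<union> P2) = card P1 + card P2"
    using P1 P2 disj(3) by (simp add: cut_matching_def card_Un_disjoint)
qed

lemma card_below_mono:
  "finite W' \<Longrightarrow> W \<subseteq> W' \<Longrightarrow> th \<le> th' \<Longrightarrow>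
     card {w \<in> W. \<rho> w < th} \<le> card {w \<in> W'. (\<rho> w :: nat) < th'}"
  by (intro card_mono) auto

lemma card_above_mono:
  "finite W' \<Longrightarrow> W \<subseteq> W' \<Longrightarrow> th' \<le> th \<Longrightarrow>
     card {w \<in> W. th \<le> \<rho> w} \<le> card {w \<in> W'. th' \<le> (\<rho> w :: nat)}"
  by (intro card_mono) auto

text \<open>A discrete intermediate value theorem: raising the threshold by one adds at most one
  element below it.\<close>
lemma threshold_with_card:
  fixes \<rho> :: "'a \<Rightarrow> nat"
  assumes "finite W" "inj_on \<rho> W" "n \<le> card W"
  shows "\<exists>th. card {w \<in> W. \<rho> w < th} = n"
proof -
  define f where "f th = card {w \<in> W. \<rho> w < th}" for th
  have f_Suc: "f (Suc m) \<le> Suc (f m)" for m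
  proof -
    have "{w \<in> W. \<rho> w < Suc m} = {w \<in> W. \<rho> w < m} \<union> {w \<in> W. \<rho> w = m}" by auto
    then have "f (Suc m) \<le> f m + card {w \<in> W. \<rho> w = m}"
      unfolding f_def by (simp add: card_Un_le)
    moreover have "card {w \<in> W. \<rho> w = m} \<le> 1"
      using assms(1,2) by (auto simp: card_le_Suc0_iff_eq inj_on_def)
    ultimately show ?thesis by linarith
  qed
  have "{w \<in> W. \<rho> w < Suc (Max (\<rho> ` W))} = W"
    using assms(1) by (auto intro!: le_imp_less_Suc Max_ge)
  then have ex: "\<exists>th. n \<le> f th"
    using assms(3) unfolding f_def by metis
  define th where "th = (LEAST th. n \<le> f th)"
  have "n \<le> f th" unfolding th_def using ex by (rule LeastI_ex)
  moreover have "f th \<le> n"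
  proof (cases th)
    case (Suc m)
    then have "\<not> n \<le> f m"
      using not_less_Least[of m "\<lambda>th. n \<le> f th"] unfolding th_def by simp
    then show ?thesis using f_Suc[of m] Suc by simp
  qed (simp add: f_def)
  ultimately show ?thesis unfolding f_def by (intro exI[of _ th]) simp
qed

text \<open>The child of \<open>a\<close> is required: the clique of \<open>a\<close> is joined to the rest only by tree edges.\<close>
definition subtree_region :: "bool list \<Rightarrow> bool list set \<Rightarrow> bool" where
  "subtree_region a Z \<longleftrightarrow> finite Z \<and> a \<in> Z \<and> (\<exists>x. a @ [x] \<in> Z) \<and>
     (\<forall>b\<in>Z. \<exists>w. b = a @ w) \<and> (\<forall>b\<in>Z. b \<noteq> a \<longrightarrow> butlast b \<in> Z)"

lemma subtree_region_connected:
  assumes Z: "subtree_region a Z" and ne: "\<forall>b\<in>Z. I b \<noteq> {}"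
    and adj: "\<And>u v. u \<in> Sigma Z I \<Longrightarrow> v \<in> Sigma Z I \<Longrightarrow> tree_adj (fst u) (fst v) \<Longrightarrow> Q u = Q v"
    and "x \<in> Sigma Z I" "y \<in> Sigma Z I"
  shows "Q x = Q y"
proof -
  have parent: "Q (b, i) = Q (butlast b, j)"
    if "b \<in> Z" "b \<noteq> a" "i \<in> I b" "j \<in> I (butlast b)" for b i j
  proof (rule adj)
    have "b \<noteq> []" using that(1,2) Z by (auto simp: subtree_region_def)
    then show "tree_adj (fst (b, i)) (fst (butlast b, j))"
      unfolding tree_adj_def by (metis append_butlast_last_id fst_conv)
  qed (use that Z in \<open>auto simp: subtree_region_def\<close>)
  have below: "\<forall>b\<in>Z. length b = length a + Suc n \<longrightarrow> (\<forall>i\<in>I b. \<forall>j\<in>I a. Q (b, i) = Q (a, j))" for n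
  proof (induction n)
    case 0
    show ?case
    proof (intro ballI impI)
      fix b i j assume "b \<in> Z" "length b = length a + Suc 0" "i \<in> I b" "j \<in> I a"
      moreover from this obtain w where "b = a @ w" using Z by (auto simp: subtree_region_def)
      ultimately show "Q (b, i) = Q (a, j)"
        using parent[of b i j] by (cases w) auto
    qed
  next
    case (Suc n)
    show ?case
    proof (intro ballI impI)
      fix b i j assume b: "b \<in> Z" "length b = length a + Suc (Suc n)" and "i \<in> I b" "j \<in> I a"
      have "butlast b \<in> Z" "length (butlast b) = length a + Suc n"
        using b Z by (auto simp: subtree_region_def)
      moreover obtain j' where "j' \<in> I (butlast b)" using ne \<open>butlast b \<in> Z\<close> by blast
      moreover have "b \<noteq> a" using b by auto
      ultimately have "Q (b, i) = Q (butlast b, j')"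
        using parent b(1) \<open>i \<in> I b\<close> by blast
      also have "\<dots> = Q (a, j)"
        using Suc.IH \<open>butlast b \<in> Z\<close> \<open>length (butlast b) = _\<close> \<open>j' \<in> _\<close> \<open>j \<in> I a\<close> by blast
      finally show "Q (b, i) = Q (a, j)" .
    qed
  qed
  obtain x0 where "a @ [x0] \<in> Z" using Z by (auto simp: subtree_region_def)
  moreover have "a \<in> Z" using Z by (simp add: subtree_region_def)
  ultimately obtain j0 k where "j0 \<in> I a" "k \<in> I (a @ [x0])" using ne by blast
  have root: "Q (b, i) = Q (a, j0)" if bi: "b \<in> Z" "i \<in> I b" for b i
  proof (cases "b = a")
    case True
    have "\<forall>i'\<in>I (a @ [x0]). \<forall>j\<in>I a. Q (a @ [x0], i') = Q (a, j)"
      using below[of 0] \<open>a @ [x0] \<in> Z\<close> by simp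
    then show ?thesis using \<open>k \<in> _\<close> \<open>j0 \<in> I a\<close> bi(2) True by metis
  next
    case False
    obtain v where "b = a @ v" using bi(1) Z by (auto simp: subtree_region_def)
    with False have "length b = length a + Suc (length v - 1)" by (cases v) auto
    then show ?thesis using below bi \<open>j0 \<in> I a\<close> by blast
  qed
  obtain b1 i1 b2 i2 where "x = (b1, i1)" "y = (b2, i2)" by fastforce
  then show ?thesis using \<open>x \<in> Sigma Z I\<close> \<open>y \<in> Sigma Z I\<close> root[of b1 i1] root[of b2 i2] by auto
qed

lemma subtree_region_cut_edge:
  fixes \<rho> :: "bool list \<times> 'i \<Rightarrow> nat"
  assumes "subtree_region a Z" and "\<forall>b\<in>Z. I b \<noteq> {}"
    and x: "x \<in> Sigma Z I" "\<rho> x < th" and y: "y \<in> Sigma Z I" "th \<le> \<rho> y"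
  shows "\<exists>u\<in>Sigma Z I. \<exists>v\<in>Sigma Z I. \<rho> u < th \<and> th \<le> \<rho> v \<and> tree_adj (fst u) (fst v)"
proof (rule ccontr)
  assume "\<not> ?thesis"
  then have "(\<rho> u < th) = (\<rho> v < th)"
    if "u \<in> Sigma Z I" "v \<in> Sigma Z I" "tree_adj (fst u) (fst v)" for u v
    using that tree_adj_sym by (metis not_le)
  then have "(\<rho> x < th) = (\<rho> y < th)"
    by (rule subtree_region_connected[where Q = "\<lambda>w. \<rho> w < th", OF assms(1,2) _ x(1) y(1)])
  then show False using x(2) y(2) by simp
qed

lemma card_filter_Diff_pair:
  "finite W \<Longrightarrow> u \<in> W \<Longrightarrow> P u \<Longrightarrow> \<not> P v \<Longrightarrow> card {w \<in> W - {u, v}. P w} = card {w \<in> W. P w} - 1"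
proof -
  assume "finite W" "u \<in> W" "P u" "\<not> P v"
  then have "{w \<in> W - {u, v}. P w} = {w \<in> W. P w} - {u}" by auto
  then show ?thesis using \<open>finite W\<close> \<open>u \<in> W\<close> \<open>P u\<close> by (simp add: card_Diff_singleton)
qed

lemma cut_matching_single:
  "\<rho> u < th \<Longrightarrow> th \<le> \<rho> v \<Longrightarrow> tree_adj (fst u) (fst v) \<Longrightarrow> cut_matching \<rho> th {u, v} {(u, v)}"
  by (simp add: cut_matching_def)

lemma card_remove_other_clique:
  assumes "finite (I b)" and "fst u \<noteq> fst v"
  shows "card (I b) - 1 \<le> card {i \<in> I b. (b, i) \<noteq> u \<and> (b, i) \<noteq> v}"
proof -
  define j where "j = (if fst u = b then snd u else snd v)"
  have "I b - {j} \<subseteq> {i \<in> I b. (b, i) \<noteq> u \<and> (b, i) \<noteq> v}"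
    using assms(2) by (auto simp: j_def prod_eq_iff)
  then have "card (I b - {j}) \<le> card {i \<in> I b. (b, i) \<noteq> u \<and> (b, i) \<noteq> v}"
    using assms(1) by (intro card_mono) auto
  then show ?thesis using assms(1) by (simp add: card_Diff_singleton_if split: if_splits)
qed

text \<open>Greedily match a cut edge and delete its two endpoints; since they lie in different
  cliques, every clique loses at most one vertex.\<close>
lemma greedy_cut_matching:
  assumes Z: "subtree_region a Z"
  shows "\<forall>b\<in>Z. finite (I b) \<and> n \<le> card (I b) \<Longrightarrow>
     n \<le> card {w \<in> Sigma Z I. \<rho> w < th} \<Longrightarrow> n \<le> card {w \<in> Sigma Z I. th \<le> \<rho> w} \<Longrightarrow>
     \<exists>P. cut_matching \<rho> th (Sigma Z I) P \<and> card P = n"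
proof (induction n arbitrary: I)
  case 0
  show ?case by (intro exI[of _ "{}"]) simp
next
  case (Suc n)
  have "{w \<in> Sigma Z I. \<rho> w < th} \<noteq> {}" "{w \<in> Sigma Z I. th \<le> \<rho> w} \<noteq> {}"
    using Suc.prems(2,3) by (metis card.empty not_less_eq_eq zero_le)+
  moreover have "\<forall>b\<in>Z. I b \<noteq> {}" using Suc.prems(1) by fastforce
  ultimately obtain u v where uv: "u \<in> Sigma Z I" "v \<in> Sigma Z I" "\<rho> u < th" "th \<le> \<rho> v"
    "tree_adj (fst u) (fst v)"
    using subtree_region_cut_edge[OF Z] by blast
  define I' where "I' b = {i \<in> I b. (b, i) \<noteq> u \<and> (b, i) \<noteq> v}" for b
  have W': "Sigma Z I' = Sigma Z I - {u, v}" by (auto simp: I'_def)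
  have finW: "finite (Sigma Z I)" using Z Suc.prems(1) by (simp add: subtree_region_def)
  have "\<forall>b\<in>Z. finite (I' b) \<and> n \<le> card (I' b)"
    using Suc.prems(1) card_remove_other_clique[OF _ tree_adj_neq[OF uv(5)]]
    by (fastforce simp: I'_def)
  moreover have "n \<le> card {w \<in> Sigma Z I'. \<rho> w < th}"
    using card_filter_Diff_pair[OF finW uv(1), of "\<lambda>w. \<rho> w < th" v] uv(3,4) Suc.prems(2)
    unfolding W' by simp
  moreover have "n \<le> card {w \<in> Sigma Z I'. th \<le> \<rho> w}"
    using card_filter_Diff_pair[OF finW uv(2), of "\<lambda>w. th \<le> \<rho> w" u] uv(3,4) Suc.prems(3)
    unfolding W' by (simp add: insert_commute)
  ultimately obtain P where P: "cut_matching \<rho> th (Sigma Z I') P" "card P = n"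
    using Suc.IH by blast
  have "{u, v} \<inter> Sigma Z I' = {}" using W' by blast
  from cut_matching_Un[OF cut_matching_single[OF uv(3-5)] P(1) this]
  have M: "cut_matching \<rho> th ({u, v} \<union> Sigma Z I') ({(u, v)} \<union> P)"
    and "card ({(u, v)} \<union> P) = Suc n"
    using P(2) by simp_all
  have "{u, v} \<union> Sigma Z I' \<subseteq> Sigma Z I" using W' uv(1,2) by blast
  from cut_matching_mono[OF M this] \<open>card ({(u, v)} \<union> P) = Suc n\<close> show ?case by blast
qed

definition descendants :: "bool list \<Rightarrow> nat \<Rightarrow> bool list set" where
  "descendants a h = {a @ w | w. length w \<le> h}"

definition subtree_vertices :: "nat \<Rightarrow> bool list \<Rightarrow> nat \<Rightarrow> (bool list \<times> nat) set" where
  "subtree_vertices k a h = descendants a h \<times> {..<k}"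

lemma finite_descendants: "finite (descendants a h)"
proof -
  have "descendants a h = (\<lambda>w. a @ w) ` {w. set w \<subseteq> UNIV \<and> length w \<le> h}"
    by (auto simp: descendants_def)
  moreover have "finite {w :: bool list. set w \<subseteq> UNIV \<and> length w \<le> h}"
    by (rule finite_lists_length_le) simp
  ultimately show ?thesis by simp
qed

lemma finite_subtree_vertices: "finite (subtree_vertices k a h)"
  by (simp add: subtree_vertices_def finite_descendants)

lemma descendants_append_subset: "descendants (a @ g) h \<subseteq> descendants a (h + length g)"
  by (force simp: descendants_def)

lemma descendants_disjoint:
  "length g = length g' \<Longrightarrow> g \<noteq> g' \<Longrightarrow> descendants (a @ g) h \<inter> descendants (a @ g') h = {}"
  by (auto simp: descendants_def append_eq_append_conv)

lemma subtree_vertices_subset_CT_vertices: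
  "length a + h \<le> r \<Longrightarrow> subtree_vertices k a h \<subseteq> CT_vertices r k"
  by (auto simp: subtree_vertices_def descendants_def CT_vertices_def tree_nodes_def)

lemma append_in_descendants: "length w \<le> h \<Longrightarrow> a @ w \<in> descendants a h"
  by (auto simp: descendants_def)

lemma butlast_in_descendants:
  assumes "b \<in> descendants a h" "b \<noteq> a"
  shows "butlast b \<in> descendants a h"
proof -
  obtain w where "b = a @ w" "length w \<le> h" "w \<noteq> []" using assms by (auto simp: descendants_def)
  then show ?thesis using append_in_descendants[of "butlast w"] by (simp add: butlast_append)
qed

lemma descendants_prefix: "b \<in> descendants a h \<Longrightarrow> \<exists>w. b = a @ w"
  by (auto simp: descendants_def)

lemma subtree_region_descendants: "1 \<le> h \<Longrightarrow> subtree_region a (descendants a h)"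
  using append_in_descendants[of "[]" h a] append_in_descendants[of "[False]" h a]
  unfolding subtree_region_def
  by (auto simp: finite_descendants butlast_in_descendants dest: descendants_prefix)

lemma subtree_region_descendants_minus:
  assumes "length g = 2"
  shows "subtree_region a (descendants a (h + 2) - descendants (a @ g) h)"
proof -
  let ?Z = "descendants a (h + 2) - descendants (a @ g) h"
  have far: "length b \<ge> length a + 2" if "b \<in> descendants (a @ g) h" for b
    using that assms by (auto simp: descendants_def)
  have "a \<in> ?Z" "a @ [\<not> hd g] \<in> ?Z"
    using assms far[of a] by (auto simp: descendants_def intro!: exI[of _ "[]"]) (cases g; auto)
  moreover have "butlast b \<in> ?Z" if b: "b \<in> ?Z" "b \<noteq> a" for b
  proof -
    obtain w where w: "b = a @ w" "length w \<le> h + 2" "w \<noteq> []"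
      using b by (auto simp: descendants_def)
    have "butlast b \<in> descendants a (h + 2)"
      using b by (simp add: butlast_in_descendants)
    moreover have "butlast b \<notin> descendants (a @ g) h"
    proof
      assume "butlast b \<in> descendants (a @ g) h"
      then obtain v where "butlast b = a @ g @ v" by (auto simp: descendants_def)
      then have b_eq: "b = a @ g @ (v @ [last b])"
        using w by (metis append_assoc append_butlast_last_id Nil_is_append_conv)
      moreover have "length (v @ [last b]) \<le> h"
      proof -
        have "length b = length a + length g + length v + 1"
          using arg_cong[OF b_eq, of length] by simp
        then show ?thesis using w(1,2) assms by auto
      qed
      ultimately have "b \<in> descendants (a @ g) h"
        using append_in_descendants[of "v @ [last b]" h "a @ g"] by simp
      then show False using b(1) by blast
    qed
    ultimately show ?thesis by blast
  qed
  ultimately show ?thesis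
    using finite_descendants by (auto simp: subtree_region_def descendants_def)
qed

definition balanced_cut ::
  "(bool list \<times> nat \<Rightarrow> nat) \<Rightarrow> nat \<Rightarrow> nat \<Rightarrow> (bool list \<times> nat) set
     \<Rightarrow> ((bool list \<times> nat) \<times> (bool list \<times> nat)) set \<Rightarrow> bool" where
  "balanced_cut \<rho> k th W P \<longleftrightarrow> cut_matching \<rho> th W P \<and>
     k \<le> card {w \<in> W. \<rho> w < th} \<and> k \<le> card {w \<in> W. th \<le> \<rho> w}"

lemma balanced_cut_base:
  assumes "1 \<le> h" and inj: "inj_on \<rho> (subtree_vertices k a h)"
  shows "\<exists>th P. balanced_cut \<rho> k th (subtree_vertices k a h) P \<and> k \<le> card P"
proof -
  let ?W = "subtree_vertices k a h"
  have "{a, a @ [False]} \<times> {..<k} \<subseteq> ?W"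
    using append_in_descendants[of "[]" h a] append_in_descendants[of "[False]" h a] assms(1)
    by (auto simp: subtree_vertices_def)
  then have "card ({a, a @ [False]} \<times> {..<k}) \<le> card ?W"
    by (intro card_mono finite_subtree_vertices)
  then have "2 * k \<le> card ?W" by (simp add: card_cartesian_product)
  moreover obtain th where low: "card {w \<in> ?W. \<rho> w < th} = k"
    using threshold_with_card[OF finite_subtree_vertices inj, of k] calculation by auto
  moreover have "card {w \<in> ?W. \<rho> w < th} + card {w \<in> ?W. th \<le> \<rho> w} = card ?W"
  proof -
    have "?W = {w \<in> ?W. \<rho> w < th} \<union> {w \<in> ?W. th \<le> \<rho> w}" by auto
    then show ?thesis using finite_subtree_vertices
      by (metis (no_types, lifting) card_Un_disjoint disjoint_iff finite_Un mem_Collect_eq not_le)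
  qed
  ultimately have high: "k \<le> card {w \<in> ?W. th \<le> \<rho> w}" by linarith
  obtain P where "cut_matching \<rho> th ?W P" "card P = k"
    using greedy_cut_matching[OF subtree_region_descendants[OF assms(1), of a],
        where I = "\<lambda>_. {..<k}" and n = k and \<rho> = \<rho> and th = th]
      low high by (auto simp: subtree_vertices_def)
  then show ?thesis
    using low high unfolding balanced_cut_def by (intro exI[of _ th] exI[of _ P]) simp
qed

text \<open>Keep the matching of the median grandchild \<open>gj\<close>; the rest of the subtree contains \<open>k\<close>
  vertices below \<open>thj\<close> (from \<open>gi\<close>) and \<open>k\<close> at least \<open>thj\<close> (from \<open>gl\<close>), so the greedy
  matching adds \<open>k\<close> edges.\<close>
lemma balanced_cut_step:
  assumes g: "length gi = 2" "length gj = 2" "length gl = 2" "gi \<noteq> gj" "gl \<noteq> gj"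
    and i: "balanced_cut \<rho> k thi (subtree_vertices k (a @ gi) h) Pi"
    and j: "balanced_cut \<rho> k thj (subtree_vertices k (a @ gj) h) Pj"
    and l: "balanced_cut \<rho> k thl (subtree_vertices k (a @ gl) h) Pl"
    and "thi \<le> thj" "thj \<le> thl"
  shows "\<exists>P. balanced_cut \<rho> k thj (subtree_vertices k a (h + 2)) P \<and> card Pj + k \<le> card P"
proof -
  let ?V = "subtree_vertices k a (h + 2)"
  define Z where "Z = descendants a (h + 2) - descendants (a @ gj) h"
  let ?W = "Z \<times> {..<k}"
  have W: "?W = ?V - subtree_vertices k (a @ gj) h"
    by (auto simp: Z_def subtree_vertices_def)
  have finW: "finite ?W" using W finite_subtree_vertices by simp
  have sub: "subtree_vertices k (a @ g) h \<subseteq> ?W" if "length g = 2" "g \<noteq> gj" for g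
    using descendants_append_subset[of a g h] descendants_disjoint[of g gj a h] that g(2)
    by (auto simp: W subtree_vertices_def)
  have "k \<le> card {w \<in> ?W. \<rho> w < thj}"
    using i card_below_mono[OF finW sub[OF g(1,4)] \<open>thi \<le> thj\<close>, where \<rho> = \<rho>]
    by (simp add: balanced_cut_def)
  moreover have "k \<le> card {w \<in> ?W. thj \<le> \<rho> w}"
    using l card_above_mono[OF finW sub[OF g(3,5)] \<open>thj \<le> thl\<close>, where \<rho> = \<rho>]
    by (simp add: balanced_cut_def)
  ultimately obtain Q where Q: "cut_matching \<rho> thj ?W Q" "card Q = k"
    using greedy_cut_matching[OF subtree_region_descendants_minus[OF g(2)],
        where I = "\<lambda>_. {..<k}" and n = k and \<rho> = \<rho> and th = thj]
    unfolding Z_def by auto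
  have "subtree_vertices k (a @ gj) h \<inter> ?W = {}" unfolding W by blast
  from cut_matching_Un[OF _ Q(1) this, of Pj] j
  have M: "cut_matching \<rho> thj (subtree_vertices k (a @ gj) h \<union> ?W) (Pj \<union> Q)"
    and cardM: "card (Pj \<union> Q) = card Pj + k"
    using Q(2) by (simp_all add: balanced_cut_def)
  have "subtree_vertices k (a @ gj) h \<union> ?W \<subseteq> ?V" "?W \<subseteq> ?V"
    using descendants_append_subset[of a gj h] g(2) unfolding W by (auto simp: subtree_vertices_def)
  have "k \<le> card {w \<in> ?V. \<rho> w < thj}"
    using card_below_mono[OF finite_subtree_vertices \<open>?W \<subseteq> ?V\<close> order_refl, where \<rho> = \<rho> and th = thj]
      \<open>k \<le> card {w \<in> ?W. \<rho> w < thj}\<close> by linarith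
  moreover have "k \<le> card {w \<in> ?V. thj \<le> \<rho> w}"
    using card_above_mono[OF finite_subtree_vertices \<open>?W \<subseteq> ?V\<close> order_refl, where \<rho> = \<rho> and th = thj]
      \<open>k \<le> card {w \<in> ?W. thj \<le> \<rho> w}\<close> by linarith
  ultimately have "balanced_cut \<rho> k thj ?V (Pj \<union> Q)"
    using cut_matching_mono[OF M \<open>_ \<union> ?W \<subseteq> ?V\<close>] by (simp add: balanced_cut_def)
  with cardM show ?thesis by auto
qed

lemma median_of_three:
  fixes f :: "'a \<Rightarrow> nat"
  assumes "distinct [x, y, z]"
  obtains i j l where "i \<in> {x, y, z}" "j \<in> {x, y, z}" "l \<in> {x, y, z}" "i \<noteq> j" "l \<noteq> j"
    "f i \<le> f j" "f j \<le> f l"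
proof -
  consider "f x \<le> f y" "f y \<le> f z" | "f z \<le> f y" "f y \<le> f x" | "f y \<le> f x" "f x \<le> f z"
    | "f z \<le> f x" "f x \<le> f y" | "f x \<le> f z" "f z \<le> f y" | "f y \<le> f z" "f z \<le> f x"
    by linarith
  then show thesis
  proof cases
    case 1 then show ?thesis using that[of x y z] assms by auto
  next
    case 2 then show ?thesis using that[of z y x] assms by auto
  next
    case 3 then show ?thesis using that[of y x z] assms by auto
  next
    case 4 then show ?thesis using that[of z x y] assms by auto
  next
    case 5 then show ?thesis using that[of x z y] assms by auto
  next
    case 6 then show ?thesis using that[of y z x] assms by auto
  qed
qed

text \<open>Here \<open>(h + 1) div 2 = \<lceil>h/2\<rceil>\<close>: each two levels of the tree contribute \<open>k\<close> edges.\<close>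
lemma balanced_cut_in_subtree:
  assumes "1 \<le> h" and "inj_on \<rho> (subtree_vertices k a h)"
  shows "\<exists>th P. balanced_cut \<rho> k th (subtree_vertices k a h) P \<and> (h + 1) div 2 * k \<le> card P"
  using assms
proof (induction h arbitrary: a rule: less_induct)
  case (less h)
  show ?case
  proof (cases "h \<le> 2")
    case True
    then have "h = 1 \<or> h = 2" using less.prems(1) by linarith
    then have "(h + 1) div 2 = 1" by auto
    then show ?thesis using balanced_cut_base[OF less.prems] by (simp only: mult_1)
  next
    case False
    define h' where "h' = h - 2"
    have h: "h = h' + 2" "1 \<le> h'" using False by (auto simp: h'_def)
    let ?G = "{[False, False], [False, True], [True, False]}"
    have "\<forall>g\<in>?G. \<exists>p. balanced_cut \<rho> k (fst p) (subtree_vertices k (a @ g) h') (snd p) \<and>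
        (h' + 1) div 2 * k \<le> card (snd p)"
    proof
      fix g assume "g \<in> ?G"
      then have "subtree_vertices k (a @ g) h' \<subseteq> subtree_vertices k a h"
        using descendants_append_subset[of a g h'] h by (auto simp: subtree_vertices_def)
      then have "inj_on \<rho> (subtree_vertices k (a @ g) h')"
        using less.prems(2) by (rule inj_on_subset[rotated])
      then show "\<exists>p. balanced_cut \<rho> k (fst p) (subtree_vertices k (a @ g) h') (snd p) \<and>
          (h' + 1) div 2 * k \<le> card (snd p)"
        using less.IH[of h' "a @ g"] h by auto
    qed
    then obtain p where p: "\<forall>g\<in>?G.
        balanced_cut \<rho> k (fst (p g)) (subtree_vertices k (a @ g) h') (snd (p g)) \<and>
        (h' + 1) div 2 * k \<le> card (snd (p g))"
      by (rule bchoice[THEN exE])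
    obtain gi gj gl where g: "gi \<in> ?G" "gj \<in> ?G" "gl \<in> ?G" "gi \<noteq> gj" "gl \<noteq> gj"
      and th: "fst (p gi) \<le> fst (p gj)" "fst (p gj) \<le> fst (p gl)"
      by (rule median_of_three[of "[False, False]" "[False, True]" "[True, False]" "\<lambda>g. fst (p g)"])
        auto
    have "length gi = 2" "length gj = 2" "length gl = 2" using g(1-3) by auto
    from balanced_cut_step[OF this g(4,5) _ _ _ th] p g(1-3)
    obtain P where P: "balanced_cut \<rho> k (fst (p gj)) (subtree_vertices k a h) P"
      "card (snd (p gj)) + k \<le> card P"
      unfolding h(1) by blast
    have "(h + 1) div 2 * k = (h' + 1) div 2 * k + k" using h(1) by simp
    also have "\<dots> \<le> card P" using P(2) p g(2) by force
    finally show ?thesis using P(1) by blast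
  qed
qed

section \<open>A fooling set for F_{r,k}\<close>

lemma F_clause:
  "{u, v} \<in> CT_edges r k \<Longrightarrow> u \<noteq> v \<Longrightarrow> {(VarV u, True), (VarE {u, v}, True), (VarV v, True)} \<in> F r k"
  unfolding F_def cnf_of_graph_def by blast

lemma F_clauseE:
  assumes "C \<in> F r k"
  obtains u v where "C = {(VarV u, True), (VarE {u, v}, True), (VarV v, True)}"
    "{u, v} \<in> CT_edges r k" "u \<noteq> v"
  using assms unfolding F_def cnf_of_graph_def by blast

lemma cut_matching_endpoints:
  assumes M: "cut_matching \<rho> th W P" and uv: "(u, v) \<in> P"
  shows "(u, z) \<in> P \<Longrightarrow> z = v" "(z, v) \<in> P \<Longrightarrow> z = u" "(z, u) \<notin> P" "(v, z) \<notin> P"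
proof -
  have inj: "inj_on fst P" "inj_on snd P" using M by (simp_all add: cut_matching_def)
  show "(u, z) \<in> P \<Longrightarrow> z = v" using inj_onD[OF inj(1) _ _ uv, of "(u, z)"] by simp
  show "(z, v) \<in> P \<Longrightarrow> z = u" using inj_onD[OF inj(2) _ _ uv, of "(z, v)"] by simp
  show "(z, u) \<notin> P" "(v, z) \<notin> P"
    using cut_matching_pairD[OF M uv] cut_matching_pairD[OF M, of z u]
      cut_matching_pairD[OF M, of v z] by auto
qed

definition fooling_assignment ::
  "((bool list \<times> nat) \<times> (bool list \<times> nat)) set \<Rightarrow> ((bool list \<times> nat) \<times> (bool list \<times> nat)) set
     \<Rightarrow> (bool list \<times> nat) gvar \<Rightarrow> bool" where
  "fooling_assignment P T x = (case x of
      VarV w \<Rightarrow> \<not> ((\<exists>v. (w, v) \<in> T) \<or> (\<exists>u. (u, w) \<in> P - T))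
    | VarE e \<Rightarrow> (\<forall>(u, v)\<in>P. e \<noteq> {u, v}))"

lemma fooling_assignment_VarV [simp]:
  "fooling_assignment P T (VarV w) \<longleftrightarrow> (\<forall>v. (w, v) \<notin> T) \<and> (\<forall>u. (u, w) \<in> P \<longrightarrow> (u, w) \<in> T)"
  by (auto simp: fooling_assignment_def)

lemma fooling_assignment_VarE [simp]:
  "fooling_assignment P T (VarE e) \<longleftrightarrow> (\<forall>(u, v)\<in>P. e \<noteq> {u, v})"
  by (simp add: fooling_assignment_def)

lemma sat_fooling_assignment:
  assumes M: "cut_matching \<rho> th W P" and "T \<subseteq> P"
  shows "sat (F r k) (fooling_assignment P T)"
  unfolding sat_def
proof
  fix C assume "C \<in> F r k"
  then obtain u v where C: "C = {(VarV u, True), (VarE {u, v}, True), (VarV v, True)}"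
    by (rule F_clauseE)
  show "\<exists>(x, b)\<in>C. fooling_assignment P T x = b"
  proof (cases "\<exists>(u', v')\<in>P. {u, v} = {u', v'}")
    case False
    then show ?thesis using C by (auto simp: fooling_assignment_def)
  next
    case True
    then obtain u' v' where p: "(u', v') \<in> P" "{u, v} = {u', v'}" by blast
    note ends = cut_matching_endpoints[OF M p(1)]
    have "(VarV u', True) \<in> C" "(VarV v', True) \<in> C" using C p(2) by (auto simp: doubleton_eq_iff)
    moreover have "fooling_assignment P T (VarV v')" if "(u', v') \<in> T"
      using that ends(2,4) \<open>T \<subseteq> P\<close> by (auto simp: fooling_assignment_def)
    moreover have "fooling_assignment P T (VarV u')" if "(u', v') \<notin> T"
      using that ends(1,3) \<open>T \<subseteq> P\<close> by (auto simp: fooling_assignment_def)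
    ultimately show ?thesis by blast
  qed
qed

lemma threshold_mix_fooling_unsat:
  assumes M: "cut_matching (\<lambda>w. SV (VarV w)) th W P" and "W \<subseteq> CT_vertices r k"
    and uv: "(u, v) \<in> P" "(u, v) \<in> T" "(u, v) \<notin> T'"
  shows "\<not> sat (F r k) (threshold_mix SV th (fooling_assignment P T) (fooling_assignment P T'))"
proof
  assume sat: "sat (F r k) (threshold_mix SV th (fooling_assignment P T) (fooling_assignment P T'))"
  have "u \<in> W" "v \<in> W" "SV (VarV u) < th" "th \<le> SV (VarV v)" "tree_adj (fst u) (fst v)"
    using cut_matching_pairD[OF M uv(1)] by auto
  moreover have "u \<noteq> v" using \<open>SV (VarV u) < th\<close> \<open>th \<le> SV (VarV v)\<close> by auto
  ultimately have "{u, v} \<in> CT_edges r k"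
    using \<open>W \<subseteq> CT_vertices r k\<close> unfolding CT_edges_def by blast
  then have clause: "{(VarV u, True), (VarE {u, v}, True), (VarV v, True)} \<in> F r k"
    using \<open>u \<noteq> v\<close> by (rule F_clause)
  let ?S = "threshold_mix SV th (fooling_assignment P T) (fooling_assignment P T')"
  have "\<not> fooling_assignment P T (VarV u)" "\<not> fooling_assignment P T' (VarV v)"
    "\<not> fooling_assignment P T (VarE {u, v})" "\<not> fooling_assignment P T' (VarE {u, v})"
    unfolding fooling_assignment_VarV fooling_assignment_VarE using uv by blast+
  then have "\<not> ?S (VarV u)" "\<not> ?S (VarV v)" "\<not> ?S (VarE {u, v})"
    using \<open>SV (VarV u) < th\<close> \<open>th \<le> SV (VarV v)\<close> by (simp_all add: threshold_mix_def)
  moreover have "\<exists>(x, b)\<in>{(VarV u, True), (VarE {u, v}, True), (VarV v, True)}. ?S x = b"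
    using sat clause unfolding sat_def by blast
  ultimately show False by auto
qed

lemma threshold_mix_same [simp]: "threshold_mix SV th S S = S"
  by (simp add: threshold_mix_def fun_eq_iff)

lemma fooling_set_fooling_assignments:
  assumes M: "cut_matching (\<lambda>w. SV (VarV w)) th W P" and "W \<subseteq> CT_vertices r k"
  shows "fooling_set (F r k) SV th (fooling_assignment P ` Pow P)"
    "card (fooling_assignment P ` Pow P) = 2 ^ card P"
proof -
  have unsat:
    "\<not> sat (F r k) (threshold_mix SV th (fooling_assignment P T) (fooling_assignment P T')) \<or>
     \<not> sat (F r k) (threshold_mix SV th (fooling_assignment P T') (fooling_assignment P T))"
    if "T \<subseteq> P" "T' \<subseteq> P" "T \<noteq> T'" for T T'
  proof -
    obtain p where "p \<in> T - T' \<or> p \<in> T' - T" using \<open>T \<noteq> T'\<close> by blast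
    then show ?thesis
      using threshold_mix_fooling_unsat[OF assms, of "fst p" "snd p"] that by auto
  qed
  have sat: "sat (F r k) (fooling_assignment P T)" if "T \<subseteq> P" for T
    using sat_fooling_assignment[OF M that] .
  show "fooling_set (F r k) SV th (fooling_assignment P ` Pow P)"
    unfolding fooling_set_def
  proof (intro conjI ballI impI)
    fix S assume "S \<in> fooling_assignment P ` Pow P"
    then show "sat (F r k) S" using sat by blast
  next
    fix S S' assume "S \<in> fooling_assignment P ` Pow P" "S' \<in> fooling_assignment P ` Pow P" "S \<noteq> S'"
    then obtain T T' where "T \<subseteq> P" "T' \<subseteq> P"
      "S = fooling_assignment P T" "S' = fooling_assignment P T'" by blast
    then show "\<not> sat (F r k) (threshold_mix SV th S S') \<or> \<not> sat (F r k) (threshold_mix SV th S' S)"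
      using unsat[of T T'] \<open>S \<noteq> S'\<close> by blast
  qed
  have "inj_on (fooling_assignment P) (Pow P)"
  proof (rule inj_onI, rule ccontr)
    fix T T' assume "T \<in> Pow P" "T' \<in> Pow P" and "T \<noteq> T'"
      and "fooling_assignment P T = fooling_assignment P T'"
    then show False using unsat[of T T'] sat[of T] by simp
  qed
  moreover have "finite P" using M by (simp add: cut_matching_def)
  ultimately show "card (fooling_assignment P ` Pow P) = 2 ^ card P"
    by (simp add: card_image card_Pow)
qed

lemma sat_if_agrees_on_prog_vars:
  assumes comp: "computes E s t G" and "sat G S" and same: "\<forall>x\<in>prog_vars E. S' x = S x"
  shows "sat G S'"
proof -
  obtain P where P: "comp_path E s t P" "agrees S P"
    using comp \<open>sat G S\<close> by (auto simp: computes_iff)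
  have "agrees S' P" unfolding agrees_def
  proof clarify
    fix x b assume "(x, b) \<in> set (labels P)"
    moreover from this have "x \<in> prog_vars E"
      using P(1) is_path_labels_prog_vars by (auto simp: comp_path_def)
    ultimately show "S' x = b" using P(2) same by (auto simp: agrees_def)
  qed
  with P(1) show ?thesis using comp by (auto simp: computes_iff)
qed

text \<open>Each vertex variable matters: making it true repairs the one clause of an edge at that vertex
  that the assignment otherwise falsifies.\<close>
lemma VarV_in_prog_vars:
  assumes comp: "computes E s t (F r k)" and "1 \<le> r" and w: "w \<in> CT_vertices r k"
  shows "VarV w \<in> prog_vars E"
proof (rule ccontr)
  assume "VarV w \<notin> prog_vars E"
  obtain b i where wb: "w = (b, i)" by fastforce
  define u where "u = (if b = [] then [False] else butlast b, i)"
  have adj: "tree_adj (fst w) (fst u)"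
  proof (cases "b = []")
    case True
    then show ?thesis by (auto simp: wb u_def tree_adj_def)
  next
    case False
    then have "b = butlast b @ [last b]" by simp
    then show ?thesis using False unfolding wb u_def tree_adj_def by (metis fst_conv)
  qed
  then have "w \<noteq> u" using tree_adj_neq by blast
  moreover have "u \<in> CT_vertices r k"
    using w wb \<open>1 \<le> r\<close> by (auto simp: u_def CT_vertices_def tree_nodes_def)
  ultimately have "{w, u} \<in> CT_edges r k"
    using w adj \<open>w \<noteq> u\<close> unfolding CT_edges_def by blast
  then have clause: "{(VarV w, True), (VarE {w, u}, True), (VarV u, True)} \<in> F r k"
    using \<open>w \<noteq> u\<close> by (rule F_clause)
  define S where "S x \<longleftrightarrow> x \<noteq> VarE {w, u} \<and> x \<noteq> VarV u" for x
  have "sat (F r k) S" unfolding sat_def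
  proof
    fix C assume "C \<in> F r k"
    then obtain p q where C: "C = {(VarV p, True), (VarE {p, q}, True), (VarV q, True)}"
      by (rule F_clauseE)
    show "\<exists>(x, b)\<in>C. S x = b"
    proof (cases "{p, q} = {w, u}")
      case True
      then have "(VarV w, True) \<in> C" using C by (auto simp: doubleton_eq_iff)
      then show ?thesis using \<open>w \<noteq> u\<close> by (intro bexI[of _ "(VarV w, True)"]) (simp_all add: S_def)
    next
      case False
      then show ?thesis using C by (intro bexI[of _ "(VarE {p, q}, True)"]) (simp_all add: S_def)
    qed
  qed
  moreover have "\<forall>x\<in>prog_vars E. (S(VarV w := False)) x = S x"
    using \<open>VarV w \<notin> prog_vars E\<close> by auto
  ultimately have "sat (F r k) (S(VarV w := False))"
    by (rule sat_if_agrees_on_prog_vars[OF comp])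
  moreover have "\<forall>(x, b)\<in>{(VarV w, True), (VarE {w, u}, True), (VarV u, True)}.
      (S(VarV w := False)) x \<noteq> b"
    using \<open>w \<noteq> u\<close> by (simp add: S_def)
  ultimately show False using clause unfolding sat_def by blast
qed

lemma cut_matching_ranking_exists:
  assumes comp: "computes E s t (F r k)" and inj: "inj_on SV (prog_vars E)" and "1 \<le> r"
  shows "\<exists>th P. cut_matching (\<lambda>w. SV (VarV w)) th (subtree_vertices k [] r) P \<and>
           (r + 1) div 2 * k \<le> card P"
proof -
  have W: "subtree_vertices k [] r \<subseteq> CT_vertices r k"
    by (rule subtree_vertices_subset_CT_vertices) simp
  have "VarV w \<in> prog_vars E" if "w \<in> subtree_vertices k [] r" for w
    using VarV_in_prog_vars[OF comp \<open>1 \<le> r\<close> subsetD[OF W that]] .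
  then have "inj_on (\<lambda>w. SV (VarV w)) (subtree_vertices k [] r)"
    by (intro inj_onI) (metis gvar.inject(1) inj inj_onD)
  then show ?thesis
    using balanced_cut_in_subtree[OF \<open>1 \<le> r\<close>] unfolding balanced_cut_def by blast
qed

lemma two_pow_cut_matching_le:
  assumes bp: "is_bp N E s t" and ord: "\<forall>P. comp_path E s t P \<longrightarrow> c_ordered c SV P"
    and comp: "computes E s t (F r k)" and "c \<ge> 1"
    and M: "cut_matching (\<lambda>w. SV (VarV w)) th W P" and W: "W \<subseteq> CT_vertices r k"
  shows "2 ^ card P \<le> card N ^ (2 * c - 1)"
proof -
  have "finite P" using M by (simp add: cut_matching_def)
  then show ?thesis
    using fooling_set_card_le[OF bp ord comp \<open>c \<ge> 1\<close> _ fooling_set_fooling_assignments(1)[OF M W]]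
      fooling_set_fooling_assignments(2)[OF M W] by simp
qed

lemma two_powr_le_of_pow_le:
  fixes m n e :: nat
  assumes "1 \<le> e" and "2 ^ m \<le> n ^ e"
  shows "2 powr (real m / real e) \<le> real n"
proof -
  have "(2 powr (real m / real e)) ^ e = (2 powr (real m / real e)) powr real e"
    by (simp add: powr_realpow)
  also have "\<dots> = 2 powr real m" using assms(1) by (simp add: powr_powr)
  also have "\<dots> = 2 ^ m" by (simp add: powr_realpow)
  also have "\<dots> \<le> real n ^ e" using assms(2) by (metis of_nat_le_iff of_nat_numeral of_nat_power)
  finally show ?thesis
    using power_le_imp_le_base[of _ "e - 1"] assms(1) by simp
qed

lemma two_powr_div_le_of_pow_le:
  fixes m n c x :: nat
  assumes "1 \<le> c" and "2 ^ m \<le> n ^ (2 * c - 1)" and "x \<le> 2 * m"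
  shows "2 powr (real x / real (4 * c - 2)) \<le> real n"
proof -
  have "real x / real (4 * c - 2) \<le> 2 * real m / real (4 * c - 2)"
    using assms(3) by (intro divide_right_mono) simp_all
  also have "\<dots> = real m / real (2 * c - 1)"
  proof -
    have "real (4 * c - 2) = 2 * real (2 * c - 1)" using assms(1) by (simp add: of_nat_diff)
    then show ?thesis by simp
  qed
  finally have "2 powr (real x / real (4 * c - 2)) \<le> 2 powr (real m / real (2 * c - 1))"
    by (simp add: powr_mono)
  also have "\<dots> \<le> real n" using assms(1,2) by (intro two_powr_le_of_pow_le) simp_all
  finally show ?thesis .
qed

theorem theorem1:
  fixes c r k :: nat
    and N :: "'n set" and E :: "('n, (bool list \<times> nat) gvar) edge set" and s t :: 'n
  assumes "c \<ge> 1" and "k \<ge> 1"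
    and "is_c_NSOBDD c N E s t"
    and "computes E s t (F r k)"
  shows "2 powr (real (r * k) / real (4 * c - 2)) \<le> real (card N)"
proof -
  obtain SV where inj: "inj_on SV (prog_vars E)" and ord: "\<forall>P. comp_path E s t P \<longrightarrow> c_ordered c SV P"
    and bp: "is_bp N E s t"
    using assms(3) by (auto simp: is_c_NSOBDD_iff)
  show ?thesis
  proof (cases "r = 0")
    case True
    then show ?thesis using bp by (auto simp: is_bp_def Suc_le_eq card_gt_0_iff)
  next
    case False
    then obtain th P where P: "cut_matching (\<lambda>w. SV (VarV w)) th (subtree_vertices k [] r) P"
      "(r + 1) div 2 * k \<le> card P"
      using cut_matching_ranking_exists[OF assms(4) inj] by auto
    have pow: "2 ^ card P \<le> card N ^ (2 * c - 1)"
      using two_pow_cut_matching_le[OF bp ord assms(4,1) P(1) subtree_vertices_subset_CT_vertices]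
      by simp
    have "r \<le> 2 * ((r + 1) div 2)" by presburger
    then have "r * k \<le> 2 * ((r + 1) div 2 * k)" by (metis mult.assoc mult_le_mono1)
    then have "r * k \<le> 2 * card P" using P(2) by linarith
    with assms(1) pow show ?thesis by (rule two_powr_div_le_of_pow_le)
  qed
qed

end
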